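(* Let $E$ be an equivalence relation on a Polish space $X$. If $E$ is Borel graphable, then its Friedman–Stanley jump $E^+$ is also Borel graphable.
   Context: $E$ is Borel graphable if there is a Borel simple undirected graph $G\subseteq X\times X$ whose connectedness relation (connected by a finite path) equals $E$. The Friedman–Stanley jump $E^+$ is the equivalence relation on $X^\mathbb{N}$ given by $(x_i)E^+(y_i)$ iff $\{[x_i]_E:i\in\mathbb{N}\}=\{[y_i]_E:i\in\mathbb{N}\}$. *)

theory Defs
  imports "HOL-Analysis.Analysis"
begin

text \<open>A (Borel) simple undirected graph on the whole space is a symmetric, irreflexive
  Borel subset of X \<times> X. Its connectedness relation (connected by a finite path, including
  the trivial path) is its reflexive-transitive closure.\<close>

definition borel_graphable :: "('a::topological_space \<times> 'a) set \<Rightarrow> bool" where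
  "borel_graphable E \<longleftrightarrow>
     (\<exists>G. G \<in> sets borel \<and> sym G \<and> irrefl G \<and> G\<^sup>* = E)"

definition fs_jump :: "('a \<times> 'a) set \<Rightarrow> ((nat \<Rightarrow> 'a) \<times> (nat \<Rightarrow> 'a)) set" where
  "fs_jump E = {(x, y). (\<lambda>i. E `` {x i}) ` UNIV = (\<lambda>i. E `` {y i}) ` UNIV}"

end

theory Submission
  imports Defs "HOL-Library.Nat_Bijection"
begin

(* Fix a Borel graph G whose connectedness relation is E, and call a sequence B
   grown from A if every entry of A occurs in B and every entry of B is an entry of A, a
   repetition of an earlier entry of B, or a G-neighbour of one. This relation only quantifies
   over indices, so it is Borel, and induction along B shows that it is contained in E^+.
   Conversely, if A E^+ B, choose G-walks linking every entry of A to an E-equivalent entry of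
   B and vice versa. Listing all these walks gives W grown from A, listing them backwards gives
   W' grown from B, and W, W' have the same range; so A, W, W', B is a path. Hence the
   symmetrised relation minus the diagonal is a Borel graph connecting exactly E^+. *)

lemma equiv_fs_jump: "equiv UNIV (fs_jump E)"
  unfolding fs_jump_def equiv_def refl_on_def sym_def trans_def by auto

lemma fs_jump_iff:
  assumes "equiv UNIV E"
  shows "(A, B) \<in> fs_jump E \<longleftrightarrow> (\<forall>i. \<exists>j. (A i, B j) \<in> E) \<and> (\<forall>j. \<exists>i. (A i, B j) \<in> E)"
proof -
  have class_eq: "E``{a} = E``{b} \<longleftrightarrow> (a, b) \<in> E" for a b
    using eq_equiv_class_iff[OF assms] by simp
  have "range (\<lambda>i. E``{A i}) \<subseteq> range (\<lambda>j. E``{B j}) \<longleftrightarrow> (\<forall>i. \<exists>j. (A i, B j) \<in> E)"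
    by (simp add: image_subset_iff image_iff class_eq)
  moreover have "range (\<lambda>j. E``{B j}) \<subseteq> range (\<lambda>i. E``{A i}) \<longleftrightarrow> (\<forall>j. \<exists>i. (A i, B j) \<in> E)"
    using assms by (simp add: image_subset_iff image_iff class_eq) (meson equivE symD)
  ultimately show ?thesis
    unfolding fs_jump_def mem_Collect_eq case_prod_conv set_eq_subset by simp
qed

lemma equiv_rtrancl_eq:
  assumes "equiv UNIV r"
  shows "r\<^sup>* = r"
  using assms unfolding equiv_def refl_on_def by (simp add: rtrancl_trancl_reflcl trancl_id Un_absorb2 Id_fstsnd_eq subset_iff)

definition grown_from :: "('a \<times> 'a) set \<Rightarrow> (nat \<Rightarrow> 'a) \<Rightarrow> (nat \<Rightarrow> 'a) \<Rightarrow> bool" where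
  "grown_from G A B \<longleftrightarrow>
     range A \<subseteq> range B \<and> (\<forall>k. B k \<in> range A \<or> (\<exists>m<k. B m = B k \<or> (B m, B k) \<in> G))"

lemma grown_from_if_range_eq: "range A = range B \<Longrightarrow> grown_from G A B"
  unfolding grown_from_def by auto

lemma grown_from_imp_fs_jump:
  assumes E: "equiv UNIV E" and "G \<subseteq> E" and grown: "grown_from G A B"
  shows "(A, B) \<in> fs_jump E"
proof -
  have refl: "(a, a) \<in> E" for a
    using E by (simp add: equiv_def refl_on_def)
  have "\<exists>i. (A i, B k) \<in> E" for k
  proof (induction k rule: less_induct)
    case (less k)
    from grown consider "B k \<in> range A" | m where "m < k" "B m = B k \<or> (B m, B k) \<in> G"
      unfolding grown_from_def by blast
    then show ?case
    proof cases
      case 1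
      then show ?thesis using refl by (metis rangeE)
    next
      case 2
      then have "(B m, B k) \<in> E" using refl \<open>G \<subseteq> E\<close> by auto
      moreover obtain i where "(A i, B m) \<in> E" using less.IH[OF \<open>m < k\<close>] ..
      ultimately show ?thesis using E by (meson equivE transD)
    qed
  qed
  moreover have "\<exists>j. (A i, B j) \<in> E" for i
    using grown refl unfolding grown_from_def by (metis image_iff rangeI subsetD)
  ultimately show ?thesis
    using fs_jump_iff[OF E] by blast
qed

definition walk_enum :: "(nat \<Rightarrow> nat \<Rightarrow> 'a) \<Rightarrow> (nat \<Rightarrow> nat) \<Rightarrow> nat \<Rightarrow> 'a" where
  "walk_enum f N m = (case prod_decode m of (n, k) \<Rightarrow> f n (min k (N n)))"

lemma walk_enum_prod_encode: "walk_enum f N (prod_encode (n, k)) = f n (min k (N n))"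
  by (simp add: walk_enum_def)

lemma range_walk_enum: "range (walk_enum f N) = {f n i |n i. i \<le> N n}"
proof -
  have "walk_enum f N = (\<lambda>(n, k). f n (min k (N n))) \<circ> prod_decode"
    by (simp add: walk_enum_def fun_eq_iff)
  then have "range (walk_enum f N) = (\<lambda>(n, k). f n (min k (N n))) ` range prod_decode"
    by (simp only: image_comp)
  also have "\<dots> = (\<lambda>(n, k). f n (min k (N n))) ` UNIV"
    by (simp only: surj_prod_decode)
  also have "\<dots> = {f n i |n i. i \<le> N n}"
  proof (intro equalityI subsetI)
    fix a assume "a \<in> (\<lambda>(n, k). f n (min k (N n))) ` UNIV"
    then show "a \<in> {f n i |n i. i \<le> N n}" by (fastforce intro: min.cobounded2)
  next
    fix a assume "a \<in> {f n i |n i. i \<le> N n}"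
    then obtain n i where "a = f n i" "i \<le> N n" by blast
    then have "a = (\<lambda>(n, k). f n (min k (N n))) (n, i)" by simp
    then show "a \<in> (\<lambda>(n, k). f n (min k (N n))) ` UNIV" by blast
  qed
  finally show ?thesis .
qed

lemma range_walk_enum_rev: "range (walk_enum (\<lambda>n i. f n (N n - i)) N) = range (walk_enum f N)"
  unfolding range_walk_enum
proof (intro equalityI subsetI)
  fix u assume "u \<in> {f n (N n - i) |n i. i \<le> N n}"
  then obtain n i where "u = f n (N n - i)" by blast
  then show "u \<in> {f n i |n i. i \<le> N n}" by fastforce
next
  fix u assume "u \<in> {f n i |n i. i \<le> N n}"
  then obtain n i where "u = f n i" "i \<le> N n" by blast
  then have "u = f n (N n - (N n - i))" by simp
  then show "u \<in> {f n (N n - i) |n i. i \<le> N n}" by fastforce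
qed

lemma grown_from_walk_enum:
  assumes walks: "\<And>n i. i < N n \<Longrightarrow> (f n i, f n (Suc i)) \<in> G"
  shows "grown_from G (\<lambda>n. f n 0) (walk_enum f N)"
  unfolding grown_from_def
proof (intro conjI allI)
  show "range (\<lambda>n. f n 0) \<subseteq> range (walk_enum f N)"
    by (metis (mono_tags) image_subsetI min_0L rangeI walk_enum_prod_encode)
  fix m
  obtain n k where m: "m = prod_encode (n, k)"
    by (metis prod_decode_inverse surj_pair)
  show "walk_enum f N m \<in> range (\<lambda>n. f n 0) \<or>
      (\<exists>m'<m. walk_enum f N m' = walk_enum f N m \<or> (walk_enum f N m', walk_enum f N m) \<in> G)"
  proof (cases k)
    case 0
    then show ?thesis by (simp add: m walk_enum_prod_encode)
  next
    case (Suc k')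
    have "prod_encode (n, k') < m"
      by (simp add: m Suc prod_encode_def)
    moreover have "f n (min k' (N n)) = f n (min k (N n)) \<or> (f n (min k' (N n)), f n (min k (N n))) \<in> G"
      using walks[of k' n] by (cases "k' < N n") (auto simp: Suc min_def)
    ultimately show ?thesis
      by (metis m walk_enum_prod_encode)
  qed
qed

lemma rtrancl_walks:
  assumes "\<And>n. (a n, b n) \<in> G\<^sup>*"
  obtains f N where "\<And>n. f n 0 = a n" "\<And>n. f n (N n) = b n"
    "\<And>n i. i < N n \<Longrightarrow> (f n i, f n (Suc i)) \<in> G"
proof -
  have "\<forall>n. \<exists>N f. f 0 = a n \<and> f N = b n \<and> (\<forall>i<N. (f i, f (Suc i)) \<in> G)"
    using assms by (auto simp: rtrancl_power relpow_fun_conv)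
  then obtain N f where "\<forall>n. f n 0 = a n \<and> f n (N n) = b n \<and> (\<forall>i<N n. (f n i, f n (Suc i)) \<in> G)"
    by metis
  then show ?thesis using that by blast
qed

lemma fs_jump_matching:
  assumes E: "equiv UNIV E" and "(x, y) \<in> fs_jump E"
  obtains a b :: "nat \<Rightarrow> 'a" where "range a = range x" "range b = range y" "\<And>n. (a n, b n) \<in> E"
proof -
  have "\<forall>t. \<exists>s. (x t, y s) \<in> E" "\<forall>t. \<exists>s. (x s, y t) \<in> E"
    using assms(2) unfolding fs_jump_iff[OF E] by simp_all
  then obtain j i where j: "\<And>t. (x t, y (j t)) \<in> E" and i: "\<And>t. (x (i t), y t) \<in> E"
    by metis
  \<comment> \<open>even indices run through all of x, odd ones through all of y\<close>
  define a where "a n = (if even n then x (n div 2) else x (i (n div 2)))" for n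
  define b where "b n = (if even n then y (j (n div 2)) else y (n div 2))" for n
  have "range a = range x"
  proof (intro equalityI subsetI)
    fix u assume "u \<in> range x"
    then obtain t where "u = x t" by blast
    then have "u = a (2 * t)" by (simp add: a_def)
    then show "u \<in> range a" by blast
  qed (auto simp: a_def)
  moreover have "range b = range y"
  proof (intro equalityI subsetI)
    fix u assume "u \<in> range y"
    then obtain t where "u = y t" by blast
    then have "u = b (2 * t + 1)" by (simp add: b_def)
    then show "u \<in> range b" by blast
  qed (auto simp: b_def)
  moreover have "(a n, b n) \<in> E" for n
    using i j by (simp add: a_def b_def)
  ultimately show ?thesis by (rule that)
qed

lemma fs_jump_imp_grown_from_chain:
  fixes x y :: "nat \<Rightarrow> 'a"
  assumes E: "equiv UNIV E" and "sym G" and "G\<^sup>* = E" and "(x, y) \<in> fs_jump E"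
  obtains W W' where "grown_from G x W" "grown_from G W W'" "grown_from G y W'"
proof -
  obtain a b :: "nat \<Rightarrow> 'a" where a: "range a = range x" and b: "range b = range y" and "\<And>n. (a n, b n) \<in> E"
    using fs_jump_matching[OF E \<open>(x, y) \<in> fs_jump E\<close>] by blast
  then have ab: "(a n, b n) \<in> G\<^sup>*" for n
    using \<open>G\<^sup>* = E\<close> by simp
  obtain f N where f0: "\<And>n. f n 0 = a n" and fN: "\<And>n. f n (N n) = b n"
    and walk: "\<And>n i. i < N n \<Longrightarrow> (f n i, f n (Suc i)) \<in> G"
    using rtrancl_walks[of a b, OF ab] by blast
  define g where "g n i = f n (N n - i)" for n i
  have walk_rev: "(g n i, g n (Suc i)) \<in> G" if "i < N n" for n i
  proof -
    have "(f n (N n - Suc i), f n (Suc (N n - Suc i))) \<in> G"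
      using walk[of "N n - Suc i" n] that by simp
    then show ?thesis
      using that \<open>sym G\<close> by (simp add: g_def Suc_diff_Suc symD)
  qed
  have "range (walk_enum f N) = range (walk_enum g N)"
    unfolding g_def by (rule range_walk_enum_rev[symmetric])
  moreover have "grown_from G x (walk_enum f N)"
    using grown_from_walk_enum[of N f G] walk a f0 by (simp add: grown_from_def)
  moreover have "grown_from G y (walk_enum g N)"
    using grown_from_walk_enum[of N g G] walk_rev b fN by (simp add: grown_from_def g_def)
  ultimately show ?thesis
    using that grown_from_if_range_eq by blast
qed

definition jump_graph :: "('a \<times> 'a) set \<Rightarrow> ((nat \<Rightarrow> 'a) \<times> (nat \<Rightarrow> 'a)) set" where
  "jump_graph G = {(A, B). A \<noteq> B \<and> (grown_from G A B \<or> grown_from G B A)}"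

lemma sym_jump_graph: "sym (jump_graph G)"
  unfolding jump_graph_def sym_def by auto

lemma irrefl_jump_graph: "irrefl (jump_graph G)"
  unfolding jump_graph_def irrefl_def by auto

lemma rtrancl_jump_graph:
  assumes E: "equiv UNIV E" and "sym G" and "G\<^sup>* = E"
  shows "(jump_graph G)\<^sup>* = fs_jump E"
proof -
  define R where "R = {(A, B). grown_from G A B}"
  have "jump_graph G = (R \<union> R\<inverse>) - Id"
    unfolding jump_graph_def R_def by auto
  then have "(jump_graph G)\<^sup>* = (R \<union> R\<inverse>)\<^sup>*"
    by (simp only: rtrancl_r_diff_Id)
  also have "\<dots> = (fs_jump E)\<^sup>*"
  proof (rule rtrancl_subset[symmetric])
    have "G \<subseteq> E" using \<open>G\<^sup>* = E\<close> by blast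
    then have "R \<subseteq> fs_jump E"
      unfolding R_def using grown_from_imp_fs_jump[OF E] by blast
    then show "R \<union> R\<inverse> \<subseteq> fs_jump E"
      using equiv_fs_jump[of E] by (auto elim: equivE dest: symD)
    show "fs_jump E \<subseteq> (R \<union> R\<inverse>)\<^sup>*"
    proof (clarify)
      fix x y assume "(x, y) \<in> fs_jump E"
      then obtain W W' where "(x, W) \<in> R" "(W, W') \<in> R" "(y, W') \<in> R"
        using fs_jump_imp_grown_from_chain[OF assms] unfolding R_def by blast
      then show "(x, y) \<in> (R \<union> R\<inverse>)\<^sup>*"
        by (meson UnI1 UnI2 converseI r_into_rtrancl rtrancl_trans)
    qed
  qed
  also have "\<dots> = fs_jump E"
    by (rule equiv_rtrancl_eq[OF equiv_fs_jump])
  finally show ?thesis .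
qed

lemma measurable_coordinate:
  fixes F :: "'b \<Rightarrow> 'i::topological_space \<Rightarrow> 'a::topological_space"
  assumes "F \<in> borel_measurable M"
  shows "(\<lambda>p. F p i) \<in> borel_measurable M"
  using measurable_comp[OF assms borel_measurable_continuous_onI[OF continuous_on_product_coordinates]]
  by (simp add: comp_def)

lemma pred_grown_from [measurable]:
  fixes G :: "('a::polish_space \<times> 'a) set"
  assumes [measurable]: "G \<in> sets borel"
    and F: "F \<in> borel_measurable M" and Q: "Q \<in> borel_measurable M"
  shows "Measurable.pred M (\<lambda>p. grown_from G (F p) (Q p))"
proof -
  note [measurable] = measurable_coordinate[OF F] measurable_coordinate[OF Q]
  show ?thesis
    unfolding grown_from_def image_subset_iff image_iff by simp measurable
qed

lemma jump_graph_borel: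
  fixes G :: "('a::polish_space \<times> 'a) set"
  assumes [measurable]: "G \<in> sets borel"
  shows "jump_graph G \<in> sets borel"
proof -
  have [measurable]: "fst \<in> borel_measurable borel" "snd \<in> borel_measurable borel"
    by (intro borel_measurable_continuous_onI continuous_intros)+
  have "Measurable.pred borel (\<lambda>p::(nat \<Rightarrow> 'a) \<times> (nat \<Rightarrow> 'a).
      fst p \<noteq> snd p \<and> (grown_from G (fst p) (snd p) \<or> grown_from G (snd p) (fst p)))"
    by measurable
  then show ?thesis
    by (simp add: pred_def jump_graph_def case_prod_beta)
qed

theorem theorem7p6:
  fixes E :: "('a::polish_space \<times> 'a) set"
  assumes "equiv UNIV E"
    and "borel_graphable E"
  shows "borel_graphable (fs_jump E)"
proof -
  obtain G where "G \<in> sets borel" "sym G" "G\<^sup>* = E"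
    using assms(2) unfolding borel_graphable_def by blast
  then show ?thesis
    unfolding borel_graphable_def
    using jump_graph_borel sym_jump_graph irrefl_jump_graph rtrancl_jump_graph[OF assms(1)] by blast
qed

end
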